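(* Let $X$ be an $X$-set parameter and let $G=G_1\sqcup G_2$ be the disjoint union of graphs $G_1$ and $G_2$. Then $\mathscr{X}^{\rm TAR}(G)\cong\mathscr{X}^{\rm TAR}(G_1)\,\square\,\mathscr{X}^{\rm TAR}(G_2)$, via the correspondence $S\mapsto(S\cap V(G_1),S\cap V(G_2))$.
   Context: All graphs are simple, finite, with nonempty vertex set. An $X$-set parameter is a graph parameter $X(G)$ defined as the minimum cardinality of an $X$-set of $G$, where the $X$-sets of each graph are subsets of its vertex set determined by some property satisfying: (1) supersets (within $V(G)$) of $X$-sets are $X$-sets; (2) the empty set is never an $X$-set; (3) an $X$-set of a disconnected graph is the union of an $X$-set of each component; (4) if $G$ has no isolated vertices, every set of $|V(G)|-1$ vertices is an $X$-set. The $X$-TAR graph $\mathscr{X}^{\rm TAR}(G)$ has as vertices all $X$-sets of $G$, with $S_1,S_2$ adjacent iff $|S_1\ominus S_2|=1$. $\square$ denotes the Cartesian product of graphs: $(a_1,a_2)\sim(b_1,b_2)$ iff ($a_1=b_1$ and $a_2b_2$ is an edge) or ($a_2=b_2$ and $a_1b_1$ is an edge). *)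

theory Defs
  imports Main
begin

type_synonym 'a graph = "'a set \<times> 'a set set"

definition verts :: "'a graph \<Rightarrow> 'a set" where "verts G = fst G"
definition edges :: "'a graph \<Rightarrow> 'a set set" where "edges G = snd G"

definition graph :: "'a graph \<Rightarrow> bool" where
  "graph G \<longleftrightarrow> finite (verts G) \<and> verts G \<noteq> {} \<and>
     edges G \<subseteq> {e. \<exists>u v. u \<noteq> v \<and> u \<in> verts G \<and> v \<in> verts G \<and> e = {u, v}}"

definition adj :: "'a graph \<Rightarrow> 'a \<Rightarrow> 'a \<Rightarrow> bool" where
  "adj G u v \<longleftrightarrow> {u, v} \<in> edges G"

definition reach :: "'a graph \<Rightarrow> 'a \<Rightarrow> 'a \<Rightarrow> bool" where
  "reach G = (adj G)\<^sup>*\<^sup>*"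

definition components :: "'a graph \<Rightarrow> 'a set set" where
  "components G = (\<lambda>v. {u \<in> verts G. reach G v u}) ` verts G"

definition induced :: "'a graph \<Rightarrow> 'a set \<Rightarrow> 'a graph" where
  "induced G W = (W, {e \<in> edges G. e \<subseteq> W})"

definition disconnected :: "'a graph \<Rightarrow> bool" where
  "disconnected G \<longleftrightarrow> card (components G) \<ge> 2"

definition isolated :: "'a graph \<Rightarrow> 'a \<Rightarrow> bool" where
  "isolated G v \<longleftrightarrow> v \<in> verts G \<and> (\<forall>e \<in> edges G. v \<notin> e)"

text \<open>Disjoint union (used when the vertex sets are disjoint).\<close>
definition disj_union :: "'a graph \<Rightarrow> 'a graph \<Rightarrow> 'a graph" where
  "disj_union G1 G2 = (verts G1 \<union> verts G2, edges G1 \<union> edges G2)"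

definition X_set_property :: "('a graph \<Rightarrow> 'a set \<Rightarrow> bool) \<Rightarrow> bool" where
  "X_set_property X \<longleftrightarrow> (\<forall>G. graph G \<longrightarrow>
     (\<forall>S. X G S \<longrightarrow> S \<subseteq> verts G) \<and>
     (\<forall>S T. X G S \<and> S \<subseteq> T \<and> T \<subseteq> verts G \<longrightarrow> X G T) \<and>
     \<not> X G {} \<and>
     (disconnected G \<longrightarrow> (\<forall>S. S \<subseteq> verts G \<longrightarrow>
          (X G S \<longleftrightarrow> (\<forall>C \<in> components G. X (induced G C) (S \<inter> C))))) \<and>
     ((\<forall>v \<in> verts G. \<not> isolated G v) \<longrightarrow>
          (\<forall>S. S \<subseteq> verts G \<and> card S = card (verts G) - 1 \<longrightarrow> X G S)))"

definition sym_diff :: "'a set \<Rightarrow> 'a set \<Rightarrow> 'a set" where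
  "sym_diff A B = (A - B) \<union> (B - A)"

definition TAR :: "('a graph \<Rightarrow> 'a set \<Rightarrow> bool) \<Rightarrow> 'a graph \<Rightarrow> 'a set graph" where
  "TAR X G = ({S. X G S},
     {{S1, S2} | S1 S2. X G S1 \<and> X G S2 \<and> card (sym_diff S1 S2) = 1})"

definition cart_prod :: "'b graph \<Rightarrow> 'c graph \<Rightarrow> ('b \<times> 'c) graph" where
  "cart_prod H1 H2 = (verts H1 \<times> verts H2,
     {{(a1, a2), (b1, b2)} | a1 a2 b1 b2.
        a1 \<in> verts H1 \<and> b1 \<in> verts H1 \<and> a2 \<in> verts H2 \<and> b2 \<in> verts H2 \<and>
        ((a1 = b1 \<and> {a2, b2} \<in> edges H2) \<or> (a2 = b2 \<and> {a1, b1} \<in> edges H1))})"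

definition iso_via :: "('b \<Rightarrow> 'c) \<Rightarrow> 'b graph \<Rightarrow> 'c graph \<Rightarrow> bool" where
  "iso_via f H K \<longleftrightarrow> bij_betw f (verts H) (verts K) \<and>
     (\<forall>u \<in> verts H. \<forall>v \<in> verts H. {u, v} \<in> edges H \<longleftrightarrow> {f u, f v} \<in> edges K)"

end

theory Submission
  imports Defs
begin

text \<open>By axiom (3), applied through the connected components, and the fact that the components
  of \<open>G\<^sub>1 \<squnion> G\<^sub>2\<close> are those of \<open>G\<^sub>1\<close> together with those of \<open>G\<^sub>2\<close>, a set \<open>S\<close> is an X-set of
  \<open>G\<^sub>1 \<squnion> G\<^sub>2\<close> iff \<open>S \<inter> V(G\<^sub>1)\<close> and \<open>S \<inter> V(G\<^sub>2)\<close> are X-sets of \<open>G\<^sub>1\<close> and \<open>G\<^sub>2\<close>; this makes the map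
  \<open>S \<mapsto> (S \<inter> V(G\<^sub>1), S \<inter> V(G\<^sub>2))\<close> a bijection on X-sets. The symmetric difference of two X-sets
  is the disjoint union of the symmetric differences of their two parts, so it is a singleton
  iff one part is unchanged and the other changes by one vertex, which is adjacency in the
  Cartesian product.\<close>

lemma edge_subset_verts:
  assumes "graph G" "e \<in> edges G"
  shows "e \<subseteq> verts G"
  using assms unfolding graph_def by blast

lemma edge_nonempty:
  assumes "graph G" "e \<in> edges G"
  shows "e \<noteq> {}"
  using assms unfolding graph_def by blast

lemma reach_in_verts:
  assumes "graph G" "reach G v u" "v \<in> verts G"
  shows "u \<in> verts G"
  using assms(2,3) unfolding reach_def
proof (induction rule: rtranclp_induct)
  case (step y z)
  then show ?case using edge_subset_verts[OF assms(1)] unfolding adj_def by blast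
qed

lemma component_subset_verts: "C \<in> components G \<Longrightarrow> C \<subseteq> verts G"
  unfolding components_def by blast

lemma Union_components: "\<Union> (components G) = verts G"
  unfolding components_def reach_def by blast

lemma components_not_disconnected:
  assumes "graph G" "\<not> disconnected G"
  shows "components G = {verts G}"
proof -
  have "finite (components G)" "components G \<noteq> {}"
    using assms(1) unfolding components_def graph_def by simp_all
  then have "card (components G) \<noteq> 0" by simp
  with assms(2) have "card (components G) = 1"
    unfolding disconnected_def by linarith
  then obtain C where "components G = {C}" by (rule card_1_singletonE)
  moreover from this have "C = verts G" using Union_components[of G] by simp
  ultimately show ?thesis by simp
qed

lemma induced_verts:
  assumes "graph G"
  shows "induced G (verts G) = G"
proof -
  have "{e \<in> edges G. e \<subseteq> verts G} = edges G" using edge_subset_verts[OF assms] by blast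
  then show ?thesis unfolding induced_def verts_def edges_def by simp
qed

lemma X_set_subset_verts:
  assumes "X_set_property X" "graph G" "X G S"
  shows "S \<subseteq> verts G"
  using conjunct1[OF assms(1)[unfolded X_set_property_def, rule_format, OF assms(2)]] assms(3)
  by blast

lemma X_set_disconnected:
  assumes "X_set_property X" "graph G" "disconnected G" "S \<subseteq> verts G"
  shows "X G S \<longleftrightarrow> (\<forall>C \<in> components G. X (induced G C) (S \<inter> C))"
  using assms unfolding X_set_property_def by blast

lemma X_set_iff_components:
  assumes X: "X_set_property X" and G: "graph G"
  shows "X G (S \<inter> verts G) \<longleftrightarrow> (\<forall>C \<in> components G. X (induced G C) (S \<inter> C))"
proof (cases "disconnected G")
  case True
  have "S \<inter> verts G \<inter> C = S \<inter> C" if "C \<in> components G" for C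
    using component_subset_verts[OF that] by blast
  then show ?thesis using X_set_disconnected[OF X G True, of "S \<inter> verts G"] by simp
next
  case False
  then show ?thesis using components_not_disconnected[OF G] induced_verts[OF G] by simp
qed

lemma disj_union_commute: "disj_union G1 G2 = disj_union G2 G1"
  unfolding disj_union_def by (simp add: Un_commute)

lemma verts_disj_union: "verts (disj_union G1 G2) = verts G1 \<union> verts G2"
  and edges_disj_union: "edges (disj_union G1 G2) = edges G1 \<union> edges G2"
  unfolding disj_union_def verts_def edges_def by simp_all

lemma graph_disj_union:
  assumes "graph G1" "graph G2"
  shows "graph (disj_union G1 G2)"
  using assms unfolding graph_def verts_disj_union edges_disj_union by blast

context
  fixes G1 G2 :: "'a graph"
  assumes G1: "graph G1" and G2: "graph G2"
    and disjoint: "verts G1 \<inter> verts G2 = {}"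
begin

lemma adj_disj_union_left:
  assumes "y \<in> verts G1"
  shows "adj (disj_union G1 G2) y z \<longleftrightarrow> adj G1 y z"
  using assms disjoint edge_subset_verts[OF G2]
  unfolding adj_def edges_disj_union by blast

lemma reach_disj_union_left:
  assumes v: "v \<in> verts G1"
  shows "reach (disj_union G1 G2) v u \<longleftrightarrow> reach G1 v u"
proof
  assume "reach (disj_union G1 G2) v u"
  then show "reach G1 v u" unfolding reach_def
  proof (induction rule: rtranclp_induct)
    case (step y z)
    then have "y \<in> verts G1" using reach_in_verts[OF G1 _ v] unfolding reach_def by blast
    with step show ?case using adj_disj_union_left by (meson rtranclp.rtrancl_into_rtrancl)
  qed simp
next
  assume "reach G1 v u"
  then show "reach (disj_union G1 G2) v u" unfolding reach_def
    by (rule rtranclp_mono[THEN predicate2D, rotated]) (auto simp: adj_def edges_disj_union)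
qed

lemma components_disj_union_left:
  "(\<lambda>v. {u \<in> verts (disj_union G1 G2). reach (disj_union G1 G2) v u}) ` verts G1
     = components G1"
  unfolding components_def
proof (rule image_cong[OF refl])
  fix v assume v: "v \<in> verts G1"
  show "{u \<in> verts (disj_union G1 G2). reach (disj_union G1 G2) v u} = {u \<in> verts G1. reach G1 v u}"
    using reach_disj_union_left[OF v] reach_in_verts[OF G1 _ v]
    unfolding verts_disj_union by auto
qed

lemma induced_disj_union_left:
  assumes "C \<subseteq> verts G1"
  shows "induced (disj_union G1 G2) C = induced G1 C"
proof -
  have "{e \<in> edges (disj_union G1 G2). e \<subseteq> C} = {e \<in> edges G1. e \<subseteq> C}"
    using assms disjoint edge_subset_verts[OF G2] edge_nonempty[OF G2]
    unfolding edges_disj_union by blast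
  then show ?thesis unfolding induced_def by simp
qed

lemma X_set_disj_union_left:
  assumes "X_set_property X"
  shows "(\<forall>C \<in> components G1. X (induced (disj_union G1 G2) C) (S \<inter> C))
           \<longleftrightarrow> X G1 (S \<inter> verts G1)"
proof -
  have "X (induced (disj_union G1 G2) C) (S \<inter> C) = X (induced G1 C) (S \<inter> C)"
    if "C \<in> components G1" for C
    using induced_disj_union_left[OF component_subset_verts[OF that]] by simp
  then show ?thesis using X_set_iff_components[OF assms G1] by simp
qed

end

lemma components_disj_union:
  assumes G1: "graph G1" and G2: "graph G2" and disjoint: "verts G1 \<inter> verts G2 = {}"
  shows "components (disj_union G1 G2) = components G1 \<union> components G2"
proof -
  have "components (disj_union G1 G2) =
      (\<lambda>v. {u \<in> verts (disj_union G1 G2). reach (disj_union G1 G2) v u}) ` verts G1 \<union>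
      (\<lambda>v. {u \<in> verts (disj_union G2 G1). reach (disj_union G2 G1) v u}) ` verts G2"
    unfolding components_def verts_disj_union image_Un disj_union_commute[of G2 G1]
    by (rule refl)
  also have "\<dots> = components G1 \<union> components G2"
    unfolding components_disj_union_left[OF G1 G2 disjoint]
      components_disj_union_left[OF G2 G1 trans[OF Int_commute disjoint]]
    by (rule refl)
  finally show ?thesis .
qed

lemma X_set_disj_union:
  assumes X: "X_set_property X" and G1: "graph G1" and G2: "graph G2"
    and disjoint: "verts G1 \<inter> verts G2 = {}"
  shows "X (disj_union G1 G2) S \<longleftrightarrow>
           S \<subseteq> verts G1 \<union> verts G2 \<and> X G1 (S \<inter> verts G1) \<and> X G2 (S \<inter> verts G2)"
proof -
  let ?G = "disj_union G1 G2"
  have G: "graph ?G" using graph_disj_union[OF G1 G2] .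
  have "X ?G S \<longleftrightarrow> S \<subseteq> verts ?G \<and> X ?G (S \<inter> verts ?G)"
    using X_set_subset_verts[OF X G] by (metis Int_absorb2)
  also have "\<dots> \<longleftrightarrow> S \<subseteq> verts ?G \<and>
      (\<forall>C \<in> components G1. X (induced ?G C) (S \<inter> C)) \<and>
      (\<forall>C \<in> components G2. X (induced (disj_union G2 G1) C) (S \<inter> C))"
    unfolding X_set_iff_components[OF X G] components_disj_union[OF G1 G2 disjoint]
      disj_union_commute[of G2 G1] by blast
  also have "\<dots> \<longleftrightarrow> S \<subseteq> verts G1 \<union> verts G2 \<and> X G1 (S \<inter> verts G1) \<and> X G2 (S \<inter> verts G2)"
    unfolding verts_disj_union X_set_disj_union_left[OF G1 G2 disjoint X]
      X_set_disj_union_left[OF G2 G1 trans[OF Int_commute disjoint] X]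
    by (rule refl)
  finally show ?thesis .
qed

lemma bij_betw_split:
  assumes "V1 \<inter> V2 = {}" "\<And>A. P A \<Longrightarrow> A \<subseteq> V1" "\<And>B. Q B \<Longrightarrow> B \<subseteq> V2"
  shows "bij_betw (\<lambda>S. (S \<inter> V1, S \<inter> V2))
           {S. S \<subseteq> V1 \<union> V2 \<and> P (S \<inter> V1) \<and> Q (S \<inter> V2)} ({A. P A} \<times> {B. Q B})"
proof (rule bij_betw_imageI)
  show "inj_on (\<lambda>S. (S \<inter> V1, S \<inter> V2)) {S. S \<subseteq> V1 \<union> V2 \<and> P (S \<inter> V1) \<and> Q (S \<inter> V2)}"
    by (rule inj_onI) blast
  show "(\<lambda>S. (S \<inter> V1, S \<inter> V2)) ` {S. S \<subseteq> V1 \<union> V2 \<and> P (S \<inter> V1) \<and> Q (S \<inter> V2)}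
      = {A. P A} \<times> {B. Q B}"
  proof (intro equalityI subsetI)
    fix p assume "p \<in> {A. P A} \<times> {B. Q B}"
    then obtain A B where p: "p = (A, B)" "P A" "Q B" by blast
    then have "(A \<union> B) \<inter> V1 = A" "(A \<union> B) \<inter> V2 = B" using assms by blast+
    with p show "p \<in> (\<lambda>S. (S \<inter> V1, S \<inter> V2)) ` {S. S \<subseteq> V1 \<union> V2 \<and> P (S \<inter> V1) \<and> Q (S \<inter> V2)}"
      using assms(2,3) by (intro image_eqI[where x = "A \<union> B"]) auto
  qed blast
qed

lemma sym_diff_empty_iff: "sym_diff A B = {} \<longleftrightarrow> A = B"
  unfolding sym_diff_def by blast

lemma sym_diff_commute: "sym_diff A B = sym_diff B A"
  unfolding sym_diff_def by blast

lemma card_sym_diff_eq_1_split: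
  assumes "V1 \<inter> V2 = {}" "A \<subseteq> V1 \<union> V2" "B \<subseteq> V1 \<union> V2" "finite A" "finite B"
  shows "card (sym_diff A B) = 1 \<longleftrightarrow>
           (A \<inter> V1 = B \<inter> V1 \<and> card (sym_diff (A \<inter> V2) (B \<inter> V2)) = 1) \<or>
           (A \<inter> V2 = B \<inter> V2 \<and> card (sym_diff (A \<inter> V1) (B \<inter> V1)) = 1)"
proof -
  let ?D1 = "sym_diff (A \<inter> V1) (B \<inter> V1)" and ?D2 = "sym_diff (A \<inter> V2) (B \<inter> V2)"
  have fin: "finite ?D1" "finite ?D2" using assms(4,5) unfolding sym_diff_def by simp_all
  have "sym_diff A B = ?D1 \<union> ?D2" "?D1 \<inter> ?D2 = {}"
    using assms(1-3) unfolding sym_diff_def by blast+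
  then have "card (sym_diff A B) = 1 \<longleftrightarrow> card ?D1 + card ?D2 = 1"
    using fin by (simp add: card_Un_disjoint)
  also have "\<dots> \<longleftrightarrow> (card ?D1 = 0 \<and> card ?D2 = 1) \<or> (card ?D2 = 0 \<and> card ?D1 = 1)"
    by arith
  also have "\<dots> \<longleftrightarrow> (A \<inter> V1 = B \<inter> V1 \<and> card ?D2 = 1) \<or> (A \<inter> V2 = B \<inter> V2 \<and> card ?D1 = 1)"
    using fin by (simp add: sym_diff_empty_iff)
  finally show ?thesis .
qed

lemma verts_TAR: "verts (TAR X G) = {S. X G S}"
  unfolding TAR_def verts_def by simp

lemma edges_TAR_iff:
  assumes "X G S1" "X G S2"
  shows "{S1, S2} \<in> edges (TAR X G) \<longleftrightarrow> card (sym_diff S1 S2) = 1"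
  using assms unfolding TAR_def edges_def
  by (auto simp: doubleton_eq_iff sym_diff_commute)

lemma verts_cart_prod: "verts (cart_prod H1 H2) = verts H1 \<times> verts H2"
  unfolding cart_prod_def verts_def by simp

lemma edges_cart_prod_iff:
  assumes "p \<in> verts H1 \<times> verts H2" "q \<in> verts H1 \<times> verts H2"
  shows "{p, q} \<in> edges (cart_prod H1 H2) \<longleftrightarrow>
           (fst p = fst q \<and> {snd p, snd q} \<in> edges H2) \<or> (snd p = snd q \<and> {fst p, fst q} \<in> edges H1)"
  using assms unfolding cart_prod_def edges_def
  by (cases p; cases q) (auto simp: doubleton_eq_iff insert_commute)

context
  fixes X :: "'a graph \<Rightarrow> 'a set \<Rightarrow> bool" and G1 G2 :: "'a graph"
  assumes X: "X_set_property X" and G1: "graph G1" and G2: "graph G2"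
    and disjoint: "verts G1 \<inter> verts G2 = {}"
begin

lemma bij_betw_verts_TAR_disj_union:
  "bij_betw (\<lambda>S. (S \<inter> verts G1, S \<inter> verts G2))
     (verts (TAR X (disj_union G1 G2))) (verts (cart_prod (TAR X G1) (TAR X G2)))"
proof -
  have "bij_betw (\<lambda>S. (S \<inter> verts G1, S \<inter> verts G2))
      {S. S \<subseteq> verts G1 \<union> verts G2 \<and> X G1 (S \<inter> verts G1) \<and> X G2 (S \<inter> verts G2)}
      ({A. X G1 A} \<times> {B. X G2 B})"
    using X_set_subset_verts[OF X G1] X_set_subset_verts[OF X G2]
    by (intro bij_betw_split[OF disjoint])
  then show ?thesis
    unfolding verts_TAR verts_cart_prod X_set_disj_union[OF X G1 G2 disjoint] .
qed

lemma edges_TAR_disj_union_iff: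
  assumes "X (disj_union G1 G2) S1" "X (disj_union G1 G2) S2"
  shows "{S1, S2} \<in> edges (TAR X (disj_union G1 G2)) \<longleftrightarrow>
           {(S1 \<inter> verts G1, S1 \<inter> verts G2), (S2 \<inter> verts G1, S2 \<inter> verts G2)}
             \<in> edges (cart_prod (TAR X G1) (TAR X G2))"
proof -
  from assms have S1: "S1 \<subseteq> verts G1 \<union> verts G2" "X G1 (S1 \<inter> verts G1)" "X G2 (S1 \<inter> verts G2)"
    and S2: "S2 \<subseteq> verts G1 \<union> verts G2" "X G1 (S2 \<inter> verts G1)" "X G2 (S2 \<inter> verts G2)"
    unfolding X_set_disj_union[OF X G1 G2 disjoint] by blast+
  have "finite (verts G1 \<union> verts G2)" using G1 G2 unfolding graph_def by simp
  then have "finite S1" "finite S2" using S1(1) S2(1) by (auto intro: finite_subset)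
  have "{S1, S2} \<in> edges (TAR X (disj_union G1 G2)) \<longleftrightarrow> card (sym_diff S1 S2) = 1"
    by (rule edges_TAR_iff[of X, OF assms])
  also have "\<dots> \<longleftrightarrow>
      (S1 \<inter> verts G1 = S2 \<inter> verts G1 \<and> card (sym_diff (S1 \<inter> verts G2) (S2 \<inter> verts G2)) = 1) \<or>
      (S1 \<inter> verts G2 = S2 \<inter> verts G2 \<and> card (sym_diff (S1 \<inter> verts G1) (S2 \<inter> verts G1)) = 1)"
    by (rule card_sym_diff_eq_1_split[OF disjoint S1(1) S2(1) \<open>finite S1\<close> \<open>finite S2\<close>])
  also have "\<dots> \<longleftrightarrow> {(S1 \<inter> verts G1, S1 \<inter> verts G2), (S2 \<inter> verts G1, S2 \<inter> verts G2)}
      \<in> edges (cart_prod (TAR X G1) (TAR X G2))"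
    using S1 S2 by (simp add: edges_cart_prod_iff verts_TAR edges_TAR_iff)
  finally show ?thesis .
qed

end

theorem proposition2p33:
  fixes X :: "'a graph \<Rightarrow> 'a set \<Rightarrow> bool" and G1 G2 :: "'a graph"
  assumes "X_set_property X"
    and "graph G1" and "graph G2"
    and "verts G1 \<inter> verts G2 = {}"
  shows "iso_via (\<lambda>S. (S \<inter> verts G1, S \<inter> verts G2))
           (TAR X (disj_union G1 G2)) (cart_prod (TAR X G1) (TAR X G2))"
  using bij_betw_verts_TAR_disj_union[OF assms] edges_TAR_disj_union_iff[OF assms]
  unfolding iso_via_def verts_TAR mem_Collect_eq by blast

end
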